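(* Let $E$ be a symmetric operator defined on a dense domain $\mathcal D$ of a Hilbert space $\mathcal H$ (real or complex). Let $d_1,d_2,\tilde d_1,\tilde d_2$ be real numbers with \[ \tilde d_1\le d_1,d_2\le\tilde d_2,\qquad\tilde d_1\ne\tilde d_2,\qquad\tilde d_1+\tilde d_2=d_1+d_2. \] If there is an orthonormal set $\{f_1,f_2\}\subset\mathcal D$ with $\langle Ef_i,f_i\rangle=\tilde d_i$ for $i=1,2$, then there exist $\alpha$ with \[ \frac{\tilde d_2-d_1}{\tilde d_2-\tilde d_1}\le\alpha\le1 \] and $\theta\in[0,2\pi)$ such that, setting \[ e_1=\sqrt\alpha\,f_1+\sqrt{1-\alpha}\,e^{i\theta}f_2,\qquad e_2=\sqrt{1-\alpha}\,f_1-\sqrt\alpha\,e^{i\theta}f_2, \] we have $\langle Ee_i,e_i\rangle=d_i$ for $i=1,2$. Moreover, if $\mathcal H$ is a real Hilbert space then $e^{i\theta}=\pm1$, and if the inequalities $\tilde d_1\le d_1,d_2\le\tilde d_2$ are all strict, then $\alpha<1$.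
   Context: $E$ symmetric means $\langle Ef,g\rangle=\langle f,Eg\rangle$ for all $f,g\in\mathcal D$. *)

theory Defs
  imports "HOL-Analysis.Analysis"
begin

text \<open>Complex Hilbert spaces are not available in the distribution libraries, so we
describe one explicitly: a carrier type 'a (an additive abelian group) together with a
complex scalar multiplication sc and a complex inner product ip (linear in the first
argument, conjugate-symmetric, positive definite), complete w.r.t. the induced norm.\<close>

definition cip_norm :: "('a \<Rightarrow> 'a \<Rightarrow> complex) \<Rightarrow> 'a \<Rightarrow> real" where
  "cip_norm ip x = sqrt (Re (ip x x))"

definition complex_hilbert_space ::
  "(complex \<Rightarrow> 'a::ab_group_add \<Rightarrow> 'a) \<Rightarrow> ('a \<Rightarrow> 'a \<Rightarrow> complex) \<Rightarrow> bool" where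
  "complex_hilbert_space sc ip \<longleftrightarrow>
     (\<forall>a x y. sc a (x + y) = sc a x + sc a y) \<and>
     (\<forall>a b x. sc (a + b) x = sc a x + sc b x) \<and>
     (\<forall>a b x. sc a (sc b x) = sc (a * b) x) \<and>
     (\<forall>x. sc 1 x = x) \<and>
     (\<forall>x y z. ip (x + y) z = ip x z + ip y z) \<and>
     (\<forall>a x y. ip (sc a x) y = a * ip x y) \<and>
     (\<forall>x y. ip y x = cnj (ip x y)) \<and>
     (\<forall>x. Im (ip x x) = 0 \<and> Re (ip x x) \<ge> 0) \<and>
     (\<forall>x. ip x x = 0 \<longrightarrow> x = 0) \<and>
     (\<forall>X :: nat \<Rightarrow> 'a.
        (\<forall>e>0. \<exists>N. \<forall>m\<ge>N. \<forall>n\<ge>N. cip_norm ip (X m - X n) < e) \<longrightarrow>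
        (\<exists>L. \<forall>e>0. \<exists>N. \<forall>n\<ge>N. cip_norm ip (X n - L) < e))"

definition complex_operator_on ::
  "(complex \<Rightarrow> 'a::ab_group_add \<Rightarrow> 'a) \<Rightarrow> 'a set \<Rightarrow> ('a \<Rightarrow> 'a) \<Rightarrow> bool" where
  "complex_operator_on sc D E \<longleftrightarrow>
     0 \<in> D \<and> (\<forall>x\<in>D. \<forall>y\<in>D. x + y \<in> D) \<and> (\<forall>a. \<forall>x\<in>D. sc a x \<in> D) \<and>
     (\<forall>x\<in>D. \<forall>y\<in>D. E (x + y) = E x + E y) \<and> (\<forall>a. \<forall>x\<in>D. E (sc a x) = sc a (E x))"

definition complex_dense :: "('a::ab_group_add \<Rightarrow> 'a \<Rightarrow> complex) \<Rightarrow> 'a set \<Rightarrow> bool" where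
  "complex_dense ip D \<longleftrightarrow> (\<forall>x. \<forall>e>0. \<exists>d\<in>D. cip_norm ip (x - d) < e)"

definition real_operator_on :: "'a::real_vector set \<Rightarrow> ('a \<Rightarrow> 'a) \<Rightarrow> bool" where
  "real_operator_on D E \<longleftrightarrow>
     0 \<in> D \<and> (\<forall>x\<in>D. \<forall>y\<in>D. x + y \<in> D) \<and> (\<forall>a. \<forall>x\<in>D. a *\<^sub>R x \<in> D) \<and>
     (\<forall>x\<in>D. \<forall>y\<in>D. E (x + y) = E x + E y) \<and> (\<forall>a. \<forall>x\<in>D. E (a *\<^sub>R x) = a *\<^sub>R E x)"

end

theory Submission
  imports Defs
begin

text \<open>On the span of f1, f2 the quadratic form f \<mapsto> \<langle>Ef, f\<rangle> is the Hermitian form with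
diagonal entries dt1, dt2 and off-diagonal entry b = \<langle>Ef2, f1\<rangle>, so e1 gets the value
\<alpha> dt1 + (1 - \<alpha>) dt2 + 2 \<surd>\<alpha> \<surd>(1 - \<alpha>) Re (e^(i\<theta>) b), and the values at e1 and e2 always add up
to the trace dt1 + dt2. Over \<complex> the phase \<theta> can be chosen to make the cross term vanish, and
\<alpha> = (dt2 - d1) / (dt2 - dt1) solves the remaining linear equation. Over \<real> only the sign
e^(i\<theta>) = \<plusminus>1 is free; chosen to make the cross term nonnegative, the value is \<ge> d1 at that \<alpha>
and equals dt1 \<le> d1 at \<alpha> = 1, so the intermediate value theorem provides \<alpha>.\<close>

lemma interpolation_weight:
  fixes t1 t2 d :: real
  assumes "t1 \<le> d" "d \<le> t2" "t1 < t2"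
  shows "0 \<le> (t2 - d) / (t2 - t1)" "(t2 - d) / (t2 - t1) \<le> 1"
    and "(t2 - d) / (t2 - t1) * t1 + (1 - (t2 - d) / (t2 - t1)) * t2 = d"
    and "(t2 - d) / (t2 - t1) < 1 \<longleftrightarrow> t1 < d"
proof -
  have "a * t1 + (1 - a) * t2 = d" if "a * (t2 - t1) = t2 - d" for a
    using that by (simp add: algebra_simps)
  moreover have "(t2 - d) / (t2 - t1) * (t2 - t1) = t2 - d"
    using assms(3) by simp
  ultimately show "(t2 - d) / (t2 - t1) * t1 + (1 - (t2 - d) / (t2 - t1)) * t2 = d"
    by blast
qed (use assms in \<open>auto simp: field_simps\<close>)

lemma exists_phase_Re_zero:
  fixes b :: complex
  obtains \<theta> where "0 \<le> \<theta>" "\<theta> < 2 * pi" "Re (exp (\<i> * of_real \<theta>) * b) = 0"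
proof
  define \<theta> where "\<theta> = Arg2pi (\<i> * cnj b)"
  then show "0 \<le> \<theta>" "\<theta> < 2 * pi"
    using Arg2pi by auto
  have polar: "\<i> * cnj b = of_real (cmod b) * exp (\<i> * of_real \<theta>)"
    using Arg2pi[of "\<i> * cnj b"] by (simp add: \<theta>_def is_Arg_def norm_mult)
  show "Re (exp (\<i> * of_real \<theta>) * b) = 0"
  proof (cases "b = 0")
    case False
    have "of_real (cmod b) * (exp (\<i> * of_real \<theta>) * b) = \<i> * (b * cnj b)"
      using polar by (metis mult.assoc mult.commute)
    also have "\<dots> = of_real (cmod b) * (\<i> * of_real (cmod b))"
      by (metis complex_norm_square mult.left_commute of_real_mult power2_eq_square)
    finally have "exp (\<i> * of_real \<theta>) * b = \<i> * of_real (cmod b)"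
      using False by simp
    then show ?thesis by simp
  qed simp
qed

lemma weight_attaining_value:
  fixes t1 t2 d \<beta> :: real
  assumes "t1 \<le> d" "d \<le> t2" "t1 < t2" "0 \<le> \<beta>"
  obtains \<alpha> where "(t2 - d) / (t2 - t1) \<le> \<alpha>" "\<alpha> \<le> 1"
    "\<alpha> * t1 + (1 - \<alpha>) * t2 + 2 * sqrt \<alpha> * sqrt (1 - \<alpha>) * \<beta> = d"
    "t1 < d \<Longrightarrow> \<alpha> < 1"
proof -
  define g where "g \<alpha> = \<alpha> * t1 + (1 - \<alpha>) * t2 + 2 * sqrt \<alpha> * sqrt (1 - \<alpha>) * \<beta>" for \<alpha>
  define \<alpha>\<^sub>0 where "\<alpha>\<^sub>0 = (t2 - d) / (t2 - t1)"
  note weight = interpolation_weight[OF assms(1-3), folded \<alpha>\<^sub>0_def]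
  have "g 1 \<le> d" "d \<le> g \<alpha>\<^sub>0"
    using assms(1,4) weight by (simp_all add: g_def)
  moreover have "\<forall>x. \<alpha>\<^sub>0 \<le> x \<and> x \<le> 1 \<longrightarrow> isCont g x"
    unfolding g_def by (intro allI impI continuous_intros)
  ultimately obtain \<alpha> where \<alpha>: "\<alpha>\<^sub>0 \<le> \<alpha>" "\<alpha> \<le> 1" "g \<alpha> = d"
    using IVT2[of g 1 d \<alpha>\<^sub>0] weight(2) by auto
  moreover have "\<alpha> < 1" if "t1 < d"
    using \<alpha> that by (cases "\<alpha> = 1") (auto simp: g_def)
  ultimately show thesis
    using that by (simp add: \<alpha>\<^sub>0_def g_def)
qed

context
  fixes sc :: "complex \<Rightarrow> 'a::ab_group_add \<Rightarrow> 'a" and ip :: "'a \<Rightarrow> 'a \<Rightarrow> complex"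
  assumes hilbert: "complex_hilbert_space sc ip"
begin

lemma ip_add_left: "ip (x + y) z = ip x z + ip y z"
  and ip_scale_left: "ip (sc a x) y = a * ip x y"
  and ip_cnj_commute: "ip y x = cnj (ip x y)"
  and scale_add_left: "sc (a + b) x = sc a x + sc b x"
  using hilbert unfolding complex_hilbert_space_def by meson+

lemma ip_add_right: "ip z (x + y) = ip z x + ip z y"
  by (metis ip_cnj_commute ip_add_left complex_cnj_add)

lemma ip_scale_right: "ip x (sc a y) = cnj a * ip x y"
  by (metis ip_cnj_commute ip_scale_left complex_cnj_mult)

lemma scale_minus_left: "sc (- a) x = - sc a x"
  using scale_add_left[of 0 0 x] scale_add_left[of a "- a" x]
  by (simp add: eq_neg_iff_add_eq_0 add.commute)

lemma quadratic_form_combination: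
  assumes op: "complex_operator_on sc D E"
    and sym: "\<forall>f\<in>D. \<forall>g\<in>D. ip (E f) g = ip f (E g)"
    and f: "f1 \<in> D" "f2 \<in> D"
    and t: "ip (E f1) f1 = of_real t1" "ip (E f2) f2 = of_real t2"
  shows "ip (E (sc x f1 + sc y f2)) (sc x f1 + sc y f2)
    = of_real ((cmod x)\<^sup>2 * t1 + (cmod y)\<^sup>2 * t2 + 2 * Re (y * cnj x * ip (E f2) f1))"
proof -
  define b where "b = ip (E f2) f1"
  have "E (sc x f1 + sc y f2) = sc x (E f1) + sc y (E f2)"
    using op f unfolding complex_operator_on_def by metis
  moreover have "ip (E f1) f2 = cnj b"
    using sym f ip_cnj_commute unfolding b_def by metis
  ultimately have "ip (E (sc x f1 + sc y f2)) (sc x f1 + sc y f2)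
    = (x * cnj x) * of_real t1 + (y * cnj y) * of_real t2 + (y * cnj x * b + cnj (y * cnj x * b))"
    by (simp add: ip_add_left ip_add_right ip_scale_left ip_scale_right t b_def[symmetric]
        algebra_simps)
  also have "\<dots> = of_real ((cmod x)\<^sup>2) * of_real t1 + of_real ((cmod y)\<^sup>2) * of_real t2
      + of_real (2 * Re (y * cnj x * b))"
    by (simp only: complex_norm_square complex_add_cnj)
  finally show ?thesis
    by (simp add: b_def)
qed

lemma complex_rotation_diagonal:
  fixes t1 t2 d1 d2 :: real
  assumes op: "complex_operator_on sc D E"
    and sym: "\<forall>f\<in>D. \<forall>g\<in>D. ip (E f) g = ip f (E g)"
    and f: "f1 \<in> D" "f2 \<in> D"
    and t: "ip (E f1) f1 = of_real t1" "ip (E f2) f2 = of_real t2"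
    and d: "t1 \<le> d1" "d1 \<le> t2" "t1 < t2" "t1 + t2 = d1 + d2"
  shows "\<exists>\<alpha> \<theta>. (t2 - d1) / (t2 - t1) \<le> \<alpha> \<and> \<alpha> \<le> 1 \<and> 0 \<le> \<theta> \<and> \<theta> < 2 * pi \<and>
    ip (E (sc (of_real (sqrt \<alpha>)) f1 + sc (of_real (sqrt (1 - \<alpha>)) * exp (\<i> * of_real \<theta>)) f2))
       (sc (of_real (sqrt \<alpha>)) f1 + sc (of_real (sqrt (1 - \<alpha>)) * exp (\<i> * of_real \<theta>)) f2)
      = of_real d1 \<and>
    ip (E (sc (of_real (sqrt (1 - \<alpha>))) f1 - sc (of_real (sqrt \<alpha>) * exp (\<i> * of_real \<theta>)) f2))
       (sc (of_real (sqrt (1 - \<alpha>))) f1 - sc (of_real (sqrt \<alpha>) * exp (\<i> * of_real \<theta>)) f2)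
      = of_real d2 \<and>
    (t1 < d1 \<longrightarrow> \<alpha> < 1)"
proof -
  obtain \<theta> where \<theta>: "0 \<le> \<theta>" "\<theta> < 2 * pi"
    and cross: "Re (exp (\<i> * of_real \<theta>) * ip (E f2) f1) = 0"
    using exists_phase_Re_zero by blast
  define \<alpha> where "\<alpha> = (t2 - d1) / (t2 - t1)"
  define a where "a = sqrt \<alpha>"
  define c where "c = sqrt (1 - \<alpha>)"
  define w where "w = exp (\<i> * of_real \<theta>)"
  note weight = interpolation_weight[OF d(1-3), folded \<alpha>_def]
  note form = quadratic_form_combination[OF op sym f t]
  have "a\<^sup>2 = \<alpha>" "c\<^sup>2 = 1 - \<alpha>" "cmod w = 1"
    using weight(1,2) unfolding a_def c_def w_def
    by (simp_all only: real_sqrt_pow2 diff_ge_0_iff_ge norm_exp_i_times)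
  then have sq: "(cmod (of_real a))\<^sup>2 = \<alpha>" "(cmod (of_real c * w))\<^sup>2 = 1 - \<alpha>"
    "(cmod (of_real c))\<^sup>2 = 1 - \<alpha>" "(cmod (- (of_real a * w)))\<^sup>2 = \<alpha>"
    by (simp_all only: norm_of_real norm_mult norm_minus_cancel mult_1_right power2_abs)
  have "of_real c * w * cnj (of_real a) = of_real (c * a) * w"
    "- (of_real a * w) * cnj (of_real c) = of_real (- a * c) * w"
    by (simp_all add: algebra_simps)
  then have no_cross: "Re (of_real c * w * cnj (of_real a) * ip (E f2) f1) = 0"
    "Re (- (of_real a * w) * cnj (of_real c) * ip (E f2) f1) = 0"
    using cross by (simp_all add: w_def mult.assoc)
  have d2: "(1 - \<alpha>) * t1 + \<alpha> * t2 = d2"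
    using weight(3) d(4) by (simp add: algebra_simps)
  have "ip (E (sc (of_real a) f1 + sc (of_real c * w) f2))
       (sc (of_real a) f1 + sc (of_real c * w) f2) = of_real d1"
    unfolding weight(3)[symmetric] form sq no_cross by simp
  moreover have "ip (E (sc (of_real c) f1 - sc (of_real a * w) f2))
       (sc (of_real c) f1 - sc (of_real a * w) f2) = of_real d2"
    unfolding d2[symmetric] diff_conv_add_uminus scale_minus_left[symmetric] form sq no_cross
    by simp
  ultimately show ?thesis
    using \<theta> weight(2,4) unfolding a_def c_def w_def \<alpha>_def by blast
qed

end

lemma real_quadratic_form_combination:
  fixes E :: "'b::real_inner \<Rightarrow> 'b"
  assumes op: "real_operator_on D E"
    and sym: "\<forall>f\<in>D. \<forall>g\<in>D. inner (E f) g = inner f (E g)"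
    and f: "f1 \<in> D" "f2 \<in> D"
  shows "inner (E (x *\<^sub>R f1 + y *\<^sub>R f2)) (x *\<^sub>R f1 + y *\<^sub>R f2)
    = x\<^sup>2 * inner (E f1) f1 + y\<^sup>2 * inner (E f2) f2 + 2 * x * y * inner (E f2) f1"
proof -
  have "E (x *\<^sub>R f1 + y *\<^sub>R f2) = x *\<^sub>R E f1 + y *\<^sub>R E f2"
    using op f unfolding real_operator_on_def by metis
  moreover have "inner (E f1) f2 = inner (E f2) f1"
    using sym f by (metis inner_commute)
  ultimately show ?thesis
    by (simp add: inner_add_left inner_add_right power2_eq_square algebra_simps)
qed

lemma real_rotation_diagonal:
  fixes E :: "'b::real_inner \<Rightarrow> 'b" and t1 t2 d1 d2 :: real
  assumes op: "real_operator_on D E"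
    and sym: "\<forall>f\<in>D. \<forall>g\<in>D. inner (E f) g = inner f (E g)"
    and f: "f1 \<in> D" "f2 \<in> D"
    and t: "inner (E f1) f1 = t1" "inner (E f2) f2 = t2"
    and d: "t1 \<le> d1" "d1 \<le> t2" "t1 < t2" "t1 + t2 = d1 + d2"
  shows "\<exists>\<alpha> (s::real). (t2 - d1) / (t2 - t1) \<le> \<alpha> \<and> \<alpha> \<le> 1 \<and> s \<in> {1, -1} \<and>
    inner (E (sqrt \<alpha> *\<^sub>R f1 + (sqrt (1 - \<alpha>) * s) *\<^sub>R f2)) (sqrt \<alpha> *\<^sub>R f1 + (sqrt (1 - \<alpha>) * s) *\<^sub>R f2)
      = d1 \<and>
    inner (E (sqrt (1 - \<alpha>) *\<^sub>R f1 - (sqrt \<alpha> * s) *\<^sub>R f2)) (sqrt (1 - \<alpha>) *\<^sub>R f1 - (sqrt \<alpha> * s) *\<^sub>R f2)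
      = d2 \<and>
    (t1 < d1 \<longrightarrow> \<alpha> < 1)"
proof -
  define b where "b = inner (E f2) f1"
  define s :: real where "s = (if 0 \<le> b then 1 else -1)"
  have s: "s * b = \<bar>b\<bar>" "s\<^sup>2 = 1" "s \<in> {1, -1}"
    by (auto simp: s_def)
  obtain \<alpha> where \<alpha>: "(t2 - d1) / (t2 - t1) \<le> \<alpha>" "\<alpha> \<le> 1"
    and attained: "\<alpha> * t1 + (1 - \<alpha>) * t2 + 2 * sqrt \<alpha> * sqrt (1 - \<alpha>) * \<bar>b\<bar> = d1"
    and strict: "t1 < d1 \<Longrightarrow> \<alpha> < 1"
    using weight_attaining_value[OF d(1-3) abs_ge_zero] by blast
  have "0 \<le> \<alpha>"
    using \<alpha>(1) interpolation_weight(1)[OF d(1-3)] by linarith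
  then have sq: "(sqrt \<alpha>)\<^sup>2 = \<alpha>" "(sqrt (1 - \<alpha>))\<^sup>2 = 1 - \<alpha>"
    using \<alpha>(2) by simp_all
  note form = real_quadratic_form_combination[OF op sym f, folded b_def, unfolded t]
  have scaleR_diff_as_plus: "x *\<^sub>R f1 - y *\<^sub>R f2 = x *\<^sub>R f1 + (- y) *\<^sub>R f2" for x y
    by simp
  have d2: "(1 - \<alpha>) * t1 + \<alpha> * t2 - 2 * sqrt \<alpha> * sqrt (1 - \<alpha>) * \<bar>b\<bar> = d2"
    using attained d(4) by (simp add: algebra_simps)
  have "inner (E (sqrt \<alpha> *\<^sub>R f1 + (sqrt (1 - \<alpha>) * s) *\<^sub>R f2))
      (sqrt \<alpha> *\<^sub>R f1 + (sqrt (1 - \<alpha>) * s) *\<^sub>R f2) = d1"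
    unfolding attained[symmetric] form power_mult_distrib sq s(2) s(1)[symmetric]
    by (simp add: algebra_simps)
  moreover have "inner (E (sqrt (1 - \<alpha>) *\<^sub>R f1 - (sqrt \<alpha> * s) *\<^sub>R f2))
      (sqrt (1 - \<alpha>) *\<^sub>R f1 - (sqrt \<alpha> * s) *\<^sub>R f2) = d2"
    unfolding d2[symmetric] scaleR_diff_as_plus form power2_minus power_mult_distrib sq s(2)
      s(1)[symmetric]
    by (simp add: algebra_simps)
  ultimately show ?thesis
    using \<alpha> strict s(3) by blast
qed

theorem lemma2p7:
  fixes d1 d2 dt1 dt2 :: real
  assumes "dt1 \<le> d1" and "d1 \<le> dt2" and "dt1 \<le> d2" and "d2 \<le> dt2"
    and "dt1 \<noteq> dt2" and "dt1 + dt2 = d1 + d2"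
  shows
   "(\<forall>(sc :: complex \<Rightarrow> 'a::ab_group_add \<Rightarrow> 'a) ip D E f1 f2.
       complex_hilbert_space sc ip \<and> complex_operator_on sc D E \<and> complex_dense ip D \<and>
       (\<forall>f\<in>D. \<forall>g\<in>D. ip (E f) g = ip f (E g)) \<and>
       f1 \<in> D \<and> f2 \<in> D \<and> ip f1 f1 = 1 \<and> ip f2 f2 = 1 \<and> ip f1 f2 = 0 \<and>
       ip (E f1) f1 = complex_of_real dt1 \<and> ip (E f2) f2 = complex_of_real dt2 \<longrightarrow>
       (\<exists>\<alpha> \<theta>. (dt2 - d1) / (dt2 - dt1) \<le> \<alpha> \<and> \<alpha> \<le> 1 \<and> 0 \<le> \<theta> \<and> \<theta> < 2 * pi \<and>
          (let e1 = sc (complex_of_real (sqrt \<alpha>)) f1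
                    + sc (complex_of_real (sqrt (1 - \<alpha>)) * exp (\<i> * complex_of_real \<theta>)) f2;
               e2 = sc (complex_of_real (sqrt (1 - \<alpha>))) f1
                    - sc (complex_of_real (sqrt \<alpha>) * exp (\<i> * complex_of_real \<theta>)) f2
           in ip (E e1) e1 = complex_of_real d1 \<and> ip (E e2) e2 = complex_of_real d2) \<and>
          (dt1 < d1 \<and> d1 < dt2 \<and> dt1 < d2 \<and> d2 < dt2 \<longrightarrow> \<alpha> < 1)))
    \<and>
    (\<forall>(D :: 'b::{real_inner, complete_space} set) E f1 f2.
       real_operator_on D E \<and> closure D = UNIV \<and>
       (\<forall>f\<in>D. \<forall>g\<in>D. inner (E f) g = inner f (E g)) \<and>
       f1 \<in> D \<and> f2 \<in> D \<and> inner f1 f1 = 1 \<and> inner f2 f2 = 1 \<and> inner f1 f2 = 0 \<and>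
       inner (E f1) f1 = dt1 \<and> inner (E f2) f2 = dt2 \<longrightarrow>
       (\<exists>\<alpha> (s::real). (dt2 - d1) / (dt2 - dt1) \<le> \<alpha> \<and> \<alpha> \<le> 1 \<and> s \<in> {1, -1} \<and>
          (let e1 = sqrt \<alpha> *\<^sub>R f1 + (sqrt (1 - \<alpha>) * s) *\<^sub>R f2;
               e2 = sqrt (1 - \<alpha>) *\<^sub>R f1 - (sqrt \<alpha> * s) *\<^sub>R f2
           in inner (E e1) e1 = d1 \<and> inner (E e2) e2 = d2) \<and>
          (dt1 < d1 \<and> d1 < dt2 \<and> dt1 < d2 \<and> d2 < dt2 \<longrightarrow> \<alpha> < 1)))"
proof -
  have d: "dt1 \<le> d1" "d1 \<le> dt2" "dt1 < dt2" "dt1 + dt2 = d1 + d2"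
    using assms by linarith+
  show ?thesis
    unfolding Let_def
    using complex_rotation_diagonal[OF _ _ _ _ _ _ _ d] real_rotation_diagonal[OF _ _ _ _ _ _ d]
    by blast
qed

end
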